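(* For all $n\ge2$ and $f_1,\dots,f_n:\mathscr{P}\to\mathbb{Q}$, $$f_1f_2\,|\,f_3\,|\,\cdots\,|\,f_n=f_1\,|\,f_2\,|\,\cdots\,|\,f_n+\sum_{A\sqcup B=\{3,\dots,n\}}\big(f_1\,|\,f_{A_1}\,|\,f_{A_2}\,|\,\cdots\big)\odot\big(f_2\,|\,f_{B_1}\,|\,f_{B_2}\,|\,\cdots\big),$$ where the sum is over ordered pairs $(A,B)$ of (possibly empty) disjoint sets with union $\{3,\dots,n\}$, $A_1,A_2,\dots$ enumerate the elements of $A$ and $B_1,B_2,\dots$ those of $B$, and a connected product with a single entry is that function itself.
   Context: $\mathscr{P}$ is the set of partitions. $f_1f_2$ is the pointwise product. Induced product: with $u_\lambda=\prod_{i:\lambda_i>0}u_{\lambda_i}$ and $\langle f\rangle_{\vec u}=\frac{\sum_\lambda f(\lambda)u_\lambda}{\sum_\lambda u_\lambda}\in\mathbb{Q}[[u_1,u_2,\dots]]$ (a linear bijection in $f$), $f\odot g$ is defined by $\langle f\odot g\rangle_{\vec u}=\langle f\rangle_{\vec u}\langle g\rangle_{\vec u}$. For functions $h_1,\dots,h_N$, the connected product is $h_1|\cdots|h_N=\sum_{\alpha\in\Pi(N)}\mu(\alpha,\mathbf{1})\bigodot_{C\in\alpha}h_C$, where $\Pi(N)$ is the set of set partitions of $\{1,\dots,N\}$, $\mu(\alpha,\mathbf{1})=(-1)^{\ell(\alpha)-1}(\ell(\alpha)-1)!$ with $\ell(\alpha)$ the number of blocks, and $h_C=\prod_{c\in C}h_c$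 (pointwise). *)

theory Defs
  imports Complex_Main "HOL-Library.Multiset" "HOL-Library.Disjoint_Sets"
begin

typedef partition = "{M :: nat multiset. 0 \<notin># M}"
  by (rule exI[of _ "{#}"]) simp

text \<open>Formal power series in \<open>u_1, u_2, \<dots>\<close> over \<open>\<rat>\<close>: the monomial
  \<open>u_\<lambda> = \<Prod> u_{\<lambda>_i}\<close> corresponds bijectively to the partition \<open>\<lambda>\<close>, so a series is a
  coefficient function \<open>partition \<Rightarrow> rat\<close>. Since \<open>u_\<mu> u_\<nu> = u_{\<mu> \<union> \<nu>}\<close> (multiset sum),
  the product of series is the following convolution.\<close>
definition ser_mult :: "(partition \<Rightarrow> rat) \<Rightarrow> (partition \<Rightarrow> rat) \<Rightarrow> partition \<Rightarrow> rat" where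
  "ser_mult F G l = (\<Sum>M\<in>{M. M \<subseteq># Rep_partition l}.
      F (Abs_partition M) * G (Abs_partition (Rep_partition l - M)))"

definition ser_one :: "partition \<Rightarrow> rat" where
  "ser_one l = (if Rep_partition l = {#} then 1 else 0)"

definition ser_Z :: "partition \<Rightarrow> rat" where
  "ser_Z = (\<lambda>_. 1)"

text \<open>The u-bracket \<open>\<langle>f\<rangle>_u = (\<Sum>_\<lambda> f(\<lambda>) u_\<lambda>) / (\<Sum>_\<lambda> u_\<lambda>)\<close>.\<close>
definition ubracket :: "(partition \<Rightarrow> rat) \<Rightarrow> partition \<Rightarrow> rat" where
  "ubracket f = ser_mult f (THE G. ser_mult ser_Z G = ser_one)"

definition odot :: "(partition \<Rightarrow> rat) \<Rightarrow> (partition \<Rightarrow> rat) \<Rightarrow> partition \<Rightarrow> rat" where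
  "odot f g = (THE h. ubracket h = ser_mult (ubracket f) (ubracket g))"

definition bigodot :: "('a \<Rightarrow> partition \<Rightarrow> rat) \<Rightarrow> 'a set \<Rightarrow> partition \<Rightarrow> rat" where
  "bigodot h A = Finite_Set.fold (\<lambda>C acc. odot (h C) acc) (\<lambda>_. 1) A"

definition connprod :: "(partition \<Rightarrow> rat) list \<Rightarrow> partition \<Rightarrow> rat" where
  "connprod hs = (\<lambda>l. \<Sum>\<alpha>\<in>{\<alpha>. partition_on {1..length hs} \<alpha>}.
      (-1) ^ (card \<alpha> - 1) * fact (card \<alpha> - 1) *
      bigodot (\<lambda>C l'. \<Prod>c\<in>C. (hs ! (c - 1)) l') \<alpha> l)"

end

theory Submission
  imports Defs
begin

text \<open>
  The u-bracket identifies functions on partitions, under pointwise addition and the induced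
  product, with power series in \<open>u\<^sub>1, u\<^sub>2, ...\<close> under multiplication. So the induced
  product makes these functions a commutative ring, and the connected product
  \<open>h\<^sub>1 | ... | h\<^sub>N\<close> is the Moebius sum of \<open>\<mu>(\<alpha>, 1) \<cdot> (\<Prod>C\<in>\<alpha>. h\<^sub>C)\<close> over the set
  partitions \<open>\<alpha>\<close> of \<open>{1..N}\<close>, computed in that ring. What remains is a statement about set partitions. Indexing the left-hand side by
  \<open>{2..n}\<close>, with \<open>2\<close> standing for \<open>f\<^sub>1f\<^sub>2\<close>, its set partitions are the partitions of
  \<open>{1..n}\<close> in which \<open>1\<close> and \<open>2\<close> share a block; they give \<open>f\<^sub>1 | ... | f\<^sub>n\<close> minus the
  contribution of the partitions separating \<open>1\<close> and \<open>2\<close>. A pair of set partitions of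
  \<open>A \<union> {1}\<close> and \<open>B \<union> {2}\<close> is the same as a partition \<open>\<gamma>\<close> of \<open>{1..n}\<close> separating
  \<open>1\<close> and \<open>2\<close> together with a set of blocks of \<open>\<gamma>\<close> containing the block of \<open>1\<close> but not
  that of \<open>2\<close>. Summed over these sets of blocks, the products of Moebius weights give
  \<open>-\<mu>(\<gamma>, 1)\<close>, since \<open>\<Sum>j\<le>k. (k choose j) \<mu>(j + 1) \<mu>(k - j + 1) = -\<mu>(k + 2)\<close>, every
  summand being \<open>(-1)\<^sup>k k!\<close>.
\<close>

section \<open>Convolution of functions on multisets\<close>

lemma finite_submultisets: "finite {M. M \<subseteq># (L::'a multiset)}"
proof (rule finite_subset)
  show "{M. M \<subseteq># L} \<subseteq> (\<Union>n\<le>size L. multisets_of_size (set_mset L) n)"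
    by (auto simp: multisets_of_size_def dest: set_mset_mono size_mset_mono)
qed (auto intro!: finite_UN_I)

lemma diff_diff_cancel_mset: "M \<subseteq># L \<Longrightarrow> L - (L - M) = (M :: 'a multiset)"
  by (metis subset_mset.add_diff_inverse add_diff_cancel_right')

definition mset_conv ::
    "('a multiset \<Rightarrow> 'b::comm_semiring_1) \<Rightarrow> ('a multiset \<Rightarrow> 'b) \<Rightarrow> 'a multiset \<Rightarrow> 'b" where
  "mset_conv F G L = (\<Sum>M | M \<subseteq># L. F M * G (L - M))"

lemma mset_conv_cong:
  "(\<And>M. M \<subseteq># L \<Longrightarrow> F M = F' M) \<Longrightarrow> (\<And>M. M \<subseteq># L \<Longrightarrow> G M = G' M) \<Longrightarrow>
    mset_conv F G L = mset_conv F' G' L"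
  unfolding mset_conv_def by (rule sum.cong) auto

lemma mset_conv_commute: "mset_conv F G L = mset_conv G F L"
  unfolding mset_conv_def
  by (rule sum.reindex_bij_witness[of _ "\<lambda>M. L - M" "\<lambda>M. L - M"])
     (auto simp: diff_diff_cancel_mset mult.commute)

lemma mset_conv_assoc: "mset_conv (mset_conv F G) H L = mset_conv F (mset_conv G H) L"
proof -
  have "mset_conv (mset_conv F G) H L
      = (\<Sum>(M, N) \<in> (SIGMA M:{M. M \<subseteq># L}. {N. N \<subseteq># M}). F N * G (M - N) * H (L - M))"
    unfolding mset_conv_def sum_distrib_right by (subst sum.Sigma) (auto simp: finite_submultisets)
  also have "\<dots> = (\<Sum>(N, K) \<in> (SIGMA N:{N. N \<subseteq># L}. {K. K \<subseteq># L - N}). F N * (G K * H (L - N - K)))"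
  proof -
    have diff_le: "M - N \<subseteq># L - N" if "N \<subseteq># M" "M \<subseteq># L" for M N
      using that by (simp add: subset_mset.le_diff_conv2 subset_mset.order_trans)
    have sum_le: "N + K \<subseteq># L" if "N \<subseteq># L" "K \<subseteq># L - N" for N K
      using that by (simp add: subset_mset.le_diff_conv2 add.commute)
    show ?thesis
      by (rule sum.reindex_bij_witness[of _ "\<lambda>(N, K). (N + K, N)" "\<lambda>(M, N). (N, M - N)"])
         (auto simp: diff_le sum_le subset_mset.add_diff_inverse mult.assoc
           intro: subset_mset.order_trans)
  qed
  also have "\<dots> = mset_conv F (mset_conv G H) L"
    unfolding mset_conv_def sum_distrib_left by (subst sum.Sigma) (auto simp: finite_submultisets)
  finally show ?thesis .
qed

definition mset_delta :: "'a multiset \<Rightarrow> 'b::comm_semiring_1" where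
  "mset_delta L = (if L = {#} then 1 else 0)"

lemma mset_conv_delta_left: "mset_conv mset_delta F L = F L"
proof -
  have "mset_conv mset_delta F L = (\<Sum>M | M \<subseteq># L. if M = {#} then F L else 0)"
    unfolding mset_conv_def mset_delta_def by (rule sum.cong) auto
  then show ?thesis by (simp add: sum.delta finite_submultisets)
qed

definition mset_mobius :: "'a multiset \<Rightarrow> 'b::comm_ring_1" where
  "mset_mobius M = (if \<forall>x. count M x \<le> 1 then (-1) ^ size M else 0)"

lemma mset_set_set_mset_if_count_le_1:
  assumes "\<And>x. count M x \<le> 1"
  shows "mset_set (set_mset M) = M"
proof (rule multiset_eqI)
  fix x show "count (mset_set (set_mset M)) x = count M x"
    using assms[of x] by (cases "x \<in># M") (auto simp: count_mset_set' count_eq_zero_iff le_Suc_eq)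
qed

lemma mset_conv_one_mobius: "mset_conv (\<lambda>_. 1) mset_mobius L = (mset_delta L :: 'b::comm_ring_1)"
proof -
  let ?sets = "{M. M \<subseteq># L \<and> (\<forall>x. count M x \<le> 1)}"
  have bij: "bij_betw mset_set (Pow (set_mset L)) ?sets"
  proof (rule bij_betw_byWitness[where f' = set_mset])
    show "\<forall>D\<in>Pow (set_mset L). set_mset (mset_set D) = D"
      by (auto dest: finite_subset)
    show "\<forall>M\<in>?sets. mset_set (set_mset M) = M"
      by (auto intro: mset_set_set_mset_if_count_le_1)
    show "mset_set ` Pow (set_mset L) \<subseteq> ?sets"
      by (auto simp: subseteq_mset_def count_mset_set' Suc_le_eq dest: finite_subset)
    show "set_mset ` ?sets \<subseteq> Pow (set_mset L)"
      by (auto dest: set_mset_mono)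
  qed
  have "mset_conv (\<lambda>_. 1) mset_mobius L = (\<Sum>M | M \<subseteq># L. (mset_mobius M :: 'b))"
    by (subst mset_conv_commute) (simp add: mset_conv_def)
  also have "\<dots> = (\<Sum>M\<in>?sets. (-1) ^ size M)"
    by (rule sum.mono_neutral_cong_right) (auto simp: mset_mobius_def finite_submultisets)
  also have "\<dots> = (\<Sum>D\<in>Pow (set_mset L). (-1) ^ card D)"
    by (subst sum.reindex_bij_betw[OF bij, symmetric]) simp
  also have "\<dots> = (\<Prod>x\<in>set_mset L. (1::'b) - 1)"
    by (subst prod_diff_conv_sum) auto
  also have "\<dots> = mset_delta L"
    by (auto simp: mset_delta_def zero_power card_gt_0_iff)
  finally show ?thesis .
qed

section \<open>The induced product\<close>

definition mset_coeff :: "(partition \<Rightarrow> rat) \<Rightarrow> nat multiset \<Rightarrow> rat" where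
  "mset_coeff F M = F (Abs_partition M)"

lemma zero_not_in_Rep_partition: "0 \<notin># Rep_partition l"
  using Rep_partition by simp

lemma ser_mult_eq_mset_conv:
  "ser_mult F G l = mset_conv (mset_coeff F) (mset_coeff G) (Rep_partition l)"
  by (simp add: ser_mult_def mset_conv_def mset_coeff_def)

lemma ser_mult_cong_mset_conv:
  assumes "\<And>M. 0 \<notin># M \<Longrightarrow> mset_coeff F M = F' M" "\<And>M. 0 \<notin># M \<Longrightarrow> mset_coeff G M = G' M"
  shows "ser_mult F G l = mset_conv F' G' (Rep_partition l)"
  unfolding ser_mult_eq_mset_conv using zero_not_in_Rep_partition
  by (intro mset_conv_cong assms) (auto dest: mset_subset_eqD)

lemma mset_coeff_ser_mult:
  "0 \<notin># M \<Longrightarrow> mset_coeff (ser_mult F G) M = mset_conv (mset_coeff F) (mset_coeff G) M"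
  by (simp add: mset_coeff_def ser_mult_eq_mset_conv Abs_partition_inverse)

lemma ser_mult_assoc: "ser_mult (ser_mult F G) H = ser_mult F (ser_mult G H)"
proof
  fix l
  have "ser_mult (ser_mult F G) H l = mset_conv (mset_conv (mset_coeff F) (mset_coeff G)) (mset_coeff H) (Rep_partition l)"
    by (rule ser_mult_cong_mset_conv) (simp_all add: mset_coeff_ser_mult)
  also have "\<dots> = mset_conv (mset_coeff F) (mset_conv (mset_coeff G) (mset_coeff H)) (Rep_partition l)"
    by (rule mset_conv_assoc)
  also have "\<dots> = ser_mult F (ser_mult G H) l"
    by (rule ser_mult_cong_mset_conv[symmetric]) (simp_all add: mset_coeff_ser_mult)
  finally show "ser_mult (ser_mult F G) H l = ser_mult F (ser_mult G H) l" .
qed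

lemma ser_mult_commute: "ser_mult F G = ser_mult G F"
  by (rule ext) (simp add: ser_mult_eq_mset_conv mset_conv_commute)

lemma ser_mult_left_commute: "ser_mult F (ser_mult G H) = ser_mult G (ser_mult F H)"
  by (metis ser_mult_assoc ser_mult_commute)

lemmas ser_mult_ac = ser_mult_assoc ser_mult_commute ser_mult_left_commute

lemma ser_mult_one_left: "ser_mult ser_one F = F"
proof
  fix l
  have "ser_mult ser_one F l = mset_conv mset_delta (mset_coeff F) (Rep_partition l)"
    by (rule ser_mult_cong_mset_conv)
       (auto simp: mset_coeff_def ser_one_def mset_delta_def Abs_partition_inverse)
  then show "ser_mult ser_one F l = F l"
    by (simp add: mset_conv_delta_left mset_coeff_def Rep_partition_inverse)
qed

text \<open>\<open>1/Z = \<Prod>\<^sub>i (1 - u\<^sub>i)\<close>: its coefficient at \<open>\<lambda>\<close> is \<open>(-1)\<^sup>\<ell>\<close>, with \<open>\<ell>\<close> the number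
  of parts, if the parts of \<open>\<lambda>\<close> are distinct, and \<open>0\<close> otherwise.\<close>

definition ser_Z_inv :: "partition \<Rightarrow> rat" where
  "ser_Z_inv l = mset_mobius (Rep_partition l)"

lemma ser_mult_Z_Z_inv: "ser_mult ser_Z ser_Z_inv = ser_one"
proof
  fix l
  have "ser_mult ser_Z ser_Z_inv l = mset_conv (\<lambda>_. 1) mset_mobius (Rep_partition l)"
    by (rule ser_mult_cong_mset_conv)
       (auto simp: mset_coeff_def ser_Z_def ser_Z_inv_def Abs_partition_inverse)
  then show "ser_mult ser_Z ser_Z_inv l = ser_one l"
    by (simp add: mset_conv_one_mobius mset_delta_def ser_one_def)
qed

lemma ser_mult_Z_inv_cancel: "ser_mult ser_Z (ser_mult ser_Z_inv F) = F"
  by (simp add: ser_mult_assoc[symmetric] ser_mult_Z_Z_inv ser_mult_one_left)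

lemma ser_mult_add_left: "ser_mult (\<lambda>l. F l + F' l) G = (\<lambda>l. ser_mult F G l + ser_mult F' G l)"
  unfolding ser_mult_def by (simp add: distrib_right sum.distrib)

lemma ser_mult_scale_left: "ser_mult (\<lambda>l. c * F l) G = (\<lambda>l. c * ser_mult F G l)"
  unfolding ser_mult_def by (simp add: sum_distrib_left mult.assoc)

lemma ubracket_eq_ser_mult: "ubracket f = ser_mult f ser_Z_inv"
proof -
  have "G = ser_Z_inv" if "ser_mult ser_Z G = ser_one" for G
  proof -
    have "G = ser_mult ser_Z_inv (ser_mult ser_Z G)"
      by (simp add: ser_mult_left_commute[of ser_Z_inv] ser_mult_Z_inv_cancel)
    also have "\<dots> = ser_Z_inv"
      by (simp add: that ser_mult_commute[of ser_Z_inv] ser_mult_one_left)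
    finally show ?thesis .
  qed
  then have "(THE G. ser_mult ser_Z G = ser_one) = ser_Z_inv"
    using ser_mult_Z_Z_inv by blast
  then show ?thesis by (simp add: ubracket_def)
qed

lemma odot_eq_ser_mult: "odot f g = ser_mult (ser_mult f g) ser_Z_inv"
  unfolding odot_def
proof (rule the_equality)
  have ubracket_mult: "ser_mult (ubracket f) (ubracket g)
      = ser_mult ser_Z_inv (ser_mult (ser_mult f g) ser_Z_inv)"
    unfolding ubracket_eq_ser_mult by (simp only: ser_mult_ac)
  then show "ubracket (ser_mult (ser_mult f g) ser_Z_inv) = ser_mult (ubracket f) (ubracket g)"
    by (simp add: ubracket_eq_ser_mult ser_mult_commute[of _ ser_Z_inv])
  fix h assume h: "ubracket h = ser_mult (ubracket f) (ubracket g)"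
  have "h = ser_mult ser_Z (ubracket h)"
    by (simp add: ubracket_eq_ser_mult ser_mult_commute[of h] ser_mult_Z_inv_cancel)
  then show "h = ser_mult (ser_mult f g) ser_Z_inv"
    by (simp add: h ubracket_mult ser_mult_Z_inv_cancel)
qed

lemma odot_assoc: "odot (odot f g) h = odot f (odot g h)"
  unfolding odot_eq_ser_mult by (simp only: ser_mult_ac)

lemma odot_commute: "odot f g = odot g f"
  unfolding odot_eq_ser_mult by (simp only: ser_mult_commute)

lemma odot_Z_left: "odot ser_Z f = f"
  unfolding odot_eq_ser_mult
  by (simp only: ser_mult_assoc ser_mult_commute[of f] ser_mult_Z_inv_cancel)

lemma odot_add_left: "odot (\<lambda>l. f l + f' l) g = (\<lambda>l. odot f g l + odot f' g l)"
  unfolding odot_eq_ser_mult by (simp add: ser_mult_add_left)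

lemma odot_const_left: "odot (\<lambda>_. c) g = (\<lambda>l. c * g l)"
proof -
  have "odot (\<lambda>l. c * ser_Z l) g = (\<lambda>l. c * odot ser_Z g l)"
    unfolding odot_eq_ser_mult by (simp add: ser_mult_scale_left)
  then show ?thesis using odot_Z_left[of g] by (simp add: ser_Z_def)
qed

typedef induced = "UNIV :: (partition \<Rightarrow> rat) set"
  by simp

setup_lifting type_definition_induced

instantiation induced :: comm_ring_1
begin

lift_definition zero_induced :: induced is "\<lambda>_. 0" .
lift_definition one_induced :: induced is ser_Z .
lift_definition plus_induced :: "induced \<Rightarrow> induced \<Rightarrow> induced" is "\<lambda>f g l. f l + g l" .
lift_definition uminus_induced :: "induced \<Rightarrow> induced" is "\<lambda>f l. - f l" .
lift_definition minus_induced :: "induced \<Rightarrow> induced \<Rightarrow> induced" is "\<lambda>f g l. f l - g l" .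
lift_definition times_induced :: "induced \<Rightarrow> induced \<Rightarrow> induced" is odot .

instance
proof
  fix a b c :: induced
  show "a * b * c = a * (b * c)"
    by transfer (rule odot_assoc)
  show "a * b = b * a"
    by transfer (rule odot_commute)
  show "1 * a = a"
    by transfer (rule odot_Z_left)
  show "(a + b) * c = a * c + b * c"
    by transfer (rule odot_add_left)
  show "(0::induced) \<noteq> 1"
    by transfer (simp add: ser_Z_def fun_eq_iff)
  show "a + b + c = a + (b + c)"
    by transfer (simp add: add.assoc)
  show "a + b = b + a"
    by transfer (simp add: add.commute)
  show "0 + a = a"
    by transfer simp
  show "- a + a = 0"
    by transfer simp
  show "a - b = a + - b"
    by transfer simp
qed

end

lemma Rep_induced_add: "Rep_induced (x + y) = (\<lambda>l. Rep_induced x l + Rep_induced y l)"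
  by transfer simp

lemma Rep_induced_mult: "Rep_induced (x * y) = odot (Rep_induced x) (Rep_induced y)"
  by transfer simp

lemma Rep_induced_sum: "Rep_induced (\<Sum>i\<in>A. X i) l = (\<Sum>i\<in>A. Rep_induced (X i) l)"
  by (induction A rule: infinite_finite_induct) (simp_all add: Rep_induced_add zero_induced.rep_eq)

lemma Rep_induced_of_int: "Rep_induced (of_int k) = (\<lambda>_. of_int k)"
proof -
  have "Rep_induced (of_nat n) = (\<lambda>_. of_nat n)" for n
    by (induction n) (simp_all add: zero_induced.rep_eq one_induced.rep_eq plus_induced.rep_eq ser_Z_def)
  then show ?thesis
    by (cases k rule: int_cases) (simp_all add: uminus_induced.rep_eq del: of_nat_Suc)
qed

lemma Rep_induced_of_int_mult: "Rep_induced (of_int k * x) l = of_int k * Rep_induced x l"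
  by (simp add: Rep_induced_mult Rep_induced_of_int odot_const_left)

lemma bigodot_eq_Rep_induced_prod:
  "finite A \<Longrightarrow> bigodot h A = Rep_induced (\<Prod>C\<in>A. Abs_induced (h C))"
proof (induction A rule: finite_induct)
  case empty
  then show ?case by (simp add: bigodot_def one_induced.rep_eq ser_Z_def)
next
  case (insert x F)
  interpret comp_fun_commute "\<lambda>C. odot (h C)"
    by unfold_locales (simp add: fun_eq_iff, metis odot_assoc odot_commute)
  have "bigodot h (insert x F) = odot (h x) (bigodot h F)"
    unfolding bigodot_def using insert.hyps by simp
  then show ?case
    using insert by (simp add: Rep_induced_mult Abs_induced_inverse)
qed

section \<open>Cumulants over set partitions\<close>

text \<open>\<open>partition_mobius k = \<mu>(\<alpha>, 1)\<close> for a set partition \<open>\<alpha>\<close> with \<open>k\<close> blocks.\<close>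

definition partition_mobius :: "nat \<Rightarrow> int" where
  "partition_mobius k = (-1) ^ (k - 1) * fact (k - 1)"

definition cumulant :: "'a set \<Rightarrow> ('a set \<Rightarrow> 'r::comm_ring_1) \<Rightarrow> 'r" where
  "cumulant S m = (\<Sum>\<alpha> | partition_on S \<alpha>. of_int (partition_mobius (card \<alpha>)) * (\<Prod>C\<in>\<alpha>. m C))"

lemma cumulant_cong: "(\<And>C. C \<subseteq> S \<Longrightarrow> m C = m' C) \<Longrightarrow> cumulant S m = cumulant S m'"
  unfolding cumulant_def
  by (intro sum.cong refl arg_cong2[where f = "(*)"] prod.cong) (auto simp: partition_on_def)

lemma partition_on_image:
  assumes "partition_on S \<alpha>" "inj_on \<sigma> S"
  shows "partition_on (\<sigma> ` S) ((`) \<sigma> ` \<alpha>)"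
proof -
  have "{} \<notin> (`) \<sigma> ` \<alpha>"
    using assms(1) by (auto simp: partition_on_def)
  then show ?thesis
    using partition_on_inj_image[OF assms] by simp
qed

lemma cumulant_bij:
  assumes "bij_betw \<sigma> S T"
  shows "cumulant S (\<lambda>C. m (\<sigma> ` C)) = cumulant T m"
proof -
  define \<tau> where "\<tau> = inv_into S \<sigma>"
  have inj: "inj_on \<sigma> S" and img: "\<sigma> ` S = T"
    using assms by (auto simp: bij_betw_def)
  have inj_inv: "inj_on \<tau> T" and img_inv: "\<tau> ` T = S"
    using bij_betw_inv_into[OF assms] by (auto simp: bij_betw_def \<tau>_def)
  have inv_image: "(`) \<tau> ` (`) \<sigma> ` \<alpha> = \<alpha>" if "partition_on S \<alpha>" for \<alpha>
  proof -
    have "\<tau> ` \<sigma> ` C = C" if "C \<in> \<alpha>" for C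
      using partition_onD1[OF \<open>partition_on S \<alpha>\<close>] that inj by (simp add: \<tau>_def Union_upper)
    then show ?thesis by (simp add: image_image cong: image_cong)
  qed
  have image_inv: "(`) \<sigma> ` (`) \<tau> ` \<beta> = \<beta>" if "partition_on T \<beta>" for \<beta>
  proof -
    have "\<sigma> ` \<tau> ` D = D" if "D \<in> \<beta>" for D
      using partition_onD1[OF \<open>partition_on T \<beta>\<close>] that img
      by (simp add: \<tau>_def Union_upper image_inv_into_cancel)
    then show ?thesis by (simp add: image_image cong: image_cong)
  qed
  have bij_partitions: "bij_betw ((`) ((`) \<sigma>)) {\<alpha>. partition_on S \<alpha>} {\<beta>. partition_on T \<beta>}"
  proof (rule bij_betw_byWitness[where f' = "(`) ((`) \<tau>)"])
    show "\<forall>\<alpha>\<in>{\<alpha>. partition_on S \<alpha>}. (`) \<tau> ` (`) \<sigma> ` \<alpha> = \<alpha>"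
      using inv_image by simp
    show "\<forall>\<beta>\<in>{\<beta>. partition_on T \<beta>}. (`) \<sigma> ` (`) \<tau> ` \<beta> = \<beta>"
      using image_inv by simp
    show "(`) ((`) \<sigma>) ` {\<alpha>. partition_on S \<alpha>} \<subseteq> {\<beta>. partition_on T \<beta>}"
      using partition_on_image[OF _ inj] img by auto
    show "(`) ((`) \<tau>) ` {\<beta>. partition_on T \<beta>} \<subseteq> {\<alpha>. partition_on S \<alpha>}"
      using partition_on_image[OF _ inj_inv] img_inv by auto
  qed
  have inj_blocks: "inj_on ((`) \<sigma>) \<alpha>" if "partition_on S \<alpha>" for \<alpha>
    using that inj by (intro inj_on_image) (simp add: partition_on_def)
  have "cumulant T m = (\<Sum>\<alpha> | partition_on S \<alpha>.
      of_int (partition_mobius (card ((`) \<sigma> ` \<alpha>))) * (\<Prod>C\<in>(`) \<sigma> ` \<alpha>. m C))"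
    unfolding cumulant_def by (rule sum.reindex_bij_betw[OF bij_partitions, symmetric])
  also have "\<dots> = cumulant S (\<lambda>C. m (\<sigma> ` C))"
    unfolding cumulant_def by (intro sum.cong refl) (simp add: card_image inj_blocks prod.reindex)
  finally show ?thesis by simp
qed

lemma sum_Pow_card:
  assumes "finite X"
  shows "(\<Sum>Y\<in>Pow X. g (card Y)) = (\<Sum>k\<le>card X. of_nat (card X choose k) * g k)"
proof -
  have "(\<Sum>Y\<in>Pow X. g (card Y)) = (\<Sum>k\<le>card X. \<Sum>Y | Y \<in> Pow X \<and> card Y = k. g (card Y))"
    using assms by (intro sum.group[symmetric]) (auto simp: card_mono)
  also have "\<dots> = (\<Sum>k\<le>card X. of_nat (card X choose k) * g k)"
    using n_subsets[OF assms] by (intro sum.cong refl) simp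
  finally show ?thesis .
qed

lemma partition_mobius_convolution:
  "(\<Sum>k\<le>n. of_nat (n choose k) * (partition_mobius (k + 1) * partition_mobius (n - k + 1)))
    = - partition_mobius (n + 2)"
proof -
  have summand: "of_nat (n choose k) * (partition_mobius (k + 1) * partition_mobius (n - k + 1))
      = (-1) ^ n * fact n" if "k \<le> n" for k
  proof -
    have "(-1::int) ^ k * (-1) ^ (n - k) = (-1) ^ n"
      using that by (simp flip: power_add)
    moreover have "fact k * fact (n - k) * of_nat (n choose k) = (fact n :: int)"
      using binomial_fact_lemma[OF that] by (metis of_nat_fact of_nat_mult)
    ultimately show ?thesis
      unfolding partition_mobius_def by (simp add: algebra_simps)
  qed
  have "(\<Sum>k\<le>n. of_nat (n choose k) * (partition_mobius (k + 1) * partition_mobius (n - k + 1)))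
      = (\<Sum>k\<le>n. (-1) ^ n * fact n)"
    using summand by (intro sum.cong) auto
  also have "\<dots> = - partition_mobius (n + 2)"
    by (simp add: partition_mobius_def algebra_simps)
  finally show ?thesis .
qed

lemma sum_partition_mobius_separating:
  assumes "finite X" "x \<in> X" "y \<in> X" "x \<noteq> y"
  shows "(\<Sum>Y | Y \<subseteq> X \<and> x \<in> Y \<and> y \<notin> Y. partition_mobius (card Y) * partition_mobius (card (X - Y)))
    = - partition_mobius (card X)"
proof -
  define R where "R = X - {x, y}"
  have "card {x, y} \<le> card X"
    using assms by (intro card_mono) auto
  then have fin_R: "finite R" and card_X: "card X = card R + 2"
    using assms by (auto simp: R_def card_Diff_subset)
  have "(\<Sum>Y | Y \<subseteq> X \<and> x \<in> Y \<and> y \<notin> Y. partition_mobius (card Y) * partition_mobius (card (X - Y)))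
      = (\<Sum>Q\<in>Pow R. partition_mobius (card Q + 1) * partition_mobius (card R - card Q + 1))"
  proof (rule sum.reindex_bij_witness[of _ "\<lambda>Y. Y - {x}" "insert x", symmetric])
    fix Q assume "Q \<in> Pow R"
    then have Q: "Q \<subseteq> R" "finite Q" "x \<notin> Q"
      using fin_R by (auto simp: R_def dest: finite_subset)
    have "X - insert x Q = insert y (R - Q)"
      using Q assms by (auto simp: R_def)
    then have "card (X - insert x Q) = card R - card Q + 1"
      using Q fin_R by (simp add: card_Diff_subset R_def)
    then show "partition_mobius (card (insert x Q)) * partition_mobius (card (X - insert x Q))
        = partition_mobius (card Q + 1) * partition_mobius (card R - card Q + 1)"
      using Q by simp
  qed (use assms in \<open>auto simp: R_def\<close>)
  also have "\<dots> = (\<Sum>k\<le>card R. of_nat (card R choose k)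
      * (partition_mobius (k + 1) * partition_mobius (card R - k + 1)))"
    by (rule sum_Pow_card[OF fin_R])
  also have "\<dots> = - partition_mobius (card X)"
    unfolding card_X by (rule partition_mobius_convolution)
  finally show ?thesis .
qed

section \<open>Merging two indices\<close>

lemma partition_on_block_eq:
  "partition_on S \<gamma> \<Longrightarrow> C \<in> \<gamma> \<Longrightarrow> D \<in> \<gamma> \<Longrightarrow> x \<in> C \<Longrightarrow> x \<in> D \<Longrightarrow> C = D"
  using disjointD[OF partition_onD2] by blast

lemma partition_on_Un:
  assumes "partition_on A \<alpha>" "partition_on B \<beta>" "A \<inter> B = {}"
  shows "partition_on (A \<union> B) (\<alpha> \<union> \<beta>)" and "\<alpha> \<inter> \<beta> = {}"
proof -
  show "partition_on (A \<union> B) (\<alpha> \<union> \<beta>)"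
    using assms by (auto simp: partition_on_def intro: disjoint_union)
  show "\<alpha> \<inter> \<beta> = {}"
  proof (rule equals0I)
    fix C assume C: "C \<in> \<alpha> \<inter> \<beta>"
    then have "C \<subseteq> A \<inter> B"
      using assms(1,2) by (auto simp: partition_on_def)
    then show False
      using C assms by (auto simp: partition_on_def)
  qed
qed

lemma partition_on_Union_subset: "partition_on S \<gamma> \<Longrightarrow> \<alpha> \<subseteq> \<gamma> \<Longrightarrow> partition_on (\<Union>\<alpha>) \<alpha>"
  unfolding partition_on_def by (auto intro: pairwise_subset)

lemma partition_on_Diff_Union:
  assumes "partition_on S \<gamma>" "\<alpha> \<subseteq> \<gamma>"
  shows "partition_on (S - \<Union>\<alpha>) (\<gamma> - \<alpha>)"
proof -
  have "\<Union>(\<gamma> - \<alpha>) = S - \<Union>\<alpha>"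
    using assms partition_on_block_eq[OF assms(1)] by (auto simp: partition_onD1[OF assms(1)])
  then show ?thesis
    using assms(1) unfolding partition_on_def by (auto intro: pairwise_subset)
qed

definition join_block :: "'a \<Rightarrow> 'a \<Rightarrow> 'a set \<Rightarrow> 'a set" where
  "join_block a b D = (if b \<in> D then insert a D else D)"

lemma partition_on_join_block:
  assumes \<beta>: "partition_on (S - {a}) \<beta>" and "a \<in> S" "b \<in> S" "a \<noteq> b"
  shows "partition_on S (join_block a b ` \<beta>)"
    and "\<exists>C\<in>join_block a b ` \<beta>. a \<in> C \<and> b \<in> C"
    and "inj_on (join_block a b) \<beta>"
    and "(\<lambda>C. C - {a}) ` join_block a b ` \<beta> = \<beta>"
proof -
  have a_notin: "a \<notin> D" if "D \<in> \<beta>" for D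
    using \<beta> that by (auto simp: partition_on_def)
  obtain D where D: "D \<in> \<beta>" "b \<in> D"
    using \<beta> assms by (auto simp: partition_on_def)
  show "partition_on S (join_block a b ` \<beta>)"
  proof (rule partition_onI)
    show "\<Union>(join_block a b ` \<beta>) = S"
      using partition_onD1[OF \<beta>] D \<open>a \<in> S\<close> by (auto simp: join_block_def split: if_splits)
    show "{} \<notin> join_block a b ` \<beta>"
      using partition_onD3[OF \<beta>] by (auto simp: join_block_def)
    fix P Q assume "P \<in> join_block a b ` \<beta>" "Q \<in> join_block a b ` \<beta>" "P \<noteq> Q"
    then obtain C E where CE: "C \<in> \<beta>" "E \<in> \<beta>" "C \<noteq> E" "P = join_block a b C" "Q = join_block a b E"
      by auto
    then have "C \<inter> E = {}"
      using disjointD[OF partition_onD2[OF \<beta>]] by blast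
    then show "disjnt P Q"
      using CE a_notin[OF CE(1)] a_notin[OF CE(2)] by (auto simp: join_block_def disjnt_def)
  qed
  show "\<exists>C\<in>join_block a b ` \<beta>. a \<in> C \<and> b \<in> C"
    using D by (auto simp: join_block_def)
  have join_minus: "join_block a b D - {a} = D" if "D \<in> \<beta>" for D
    using a_notin[OF that] by (simp add: join_block_def)
  then show "inj_on (join_block a b) \<beta>"
    by (metis inj_onI)
  show "(\<lambda>C. C - {a}) ` join_block a b ` \<beta> = \<beta>"
    using join_minus by (simp add: image_image cong: image_cong)
qed

lemma partition_on_remove_joined:
  assumes \<gamma>: "partition_on S \<gamma>" and C: "C \<in> \<gamma>" "a \<in> C" "b \<in> C" and "a \<noteq> b"
  shows "partition_on (S - {a}) ((\<lambda>D. D - {a}) ` \<gamma>)"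
    and "join_block a b ` (\<lambda>D. D - {a}) ` \<gamma> = \<gamma>"
proof -
  have block_C: "D = C" if "D \<in> \<gamma>" "a \<in> D \<or> b \<in> D" for D
    using partition_on_block_eq[OF \<gamma>] that C by blast
  show "partition_on (S - {a}) ((\<lambda>D. D - {a}) ` \<gamma>)"
  proof (rule partition_onI)
    show "\<Union>((\<lambda>D. D - {a}) ` \<gamma>) = S - {a}"
      using partition_onD1[OF \<gamma>] by auto
    show "{} \<notin> (\<lambda>D. D - {a}) ` \<gamma>"
    proof
      assume "{} \<in> (\<lambda>D. D - {a}) ` \<gamma>"
      then obtain D where D: "D \<in> \<gamma>" "D - {a} = {}"
        by auto
      then have "a \<in> D"
        using partition_onD3[OF \<gamma>] by (auto simp: subset_singleton_iff)
      then have "b \<in> D"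
        using block_C[OF D(1)] C by simp
      then show False
        using D(2) \<open>a \<noteq> b\<close> by auto
    qed
    fix P Q assume "P \<in> (\<lambda>D. D - {a}) ` \<gamma>" "Q \<in> (\<lambda>D. D - {a}) ` \<gamma>" "P \<noteq> Q"
    then show "disjnt P Q"
      using disjointD[OF partition_onD2[OF \<gamma>]] by (auto simp: disjnt_def)
  qed
  have "join_block a b (D - {a}) = D" if "D \<in> \<gamma>" for D
    using block_C[OF that] C \<open>a \<noteq> b\<close> by (cases "a \<in> D") (auto simp: join_block_def)
  then show "join_block a b ` (\<lambda>D. D - {a}) ` \<gamma> = \<gamma>"
    by (simp add: image_image cong: image_cong)
qed

lemma cumulant_join_block:
  fixes m :: "'a set \<Rightarrow> 'r::comm_ring_1"
  assumes "a \<in> S" "b \<in> S" "a \<noteq> b"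
  shows "cumulant (S - {a}) (\<lambda>D. m (join_block a b D))
    = (\<Sum>\<gamma> | partition_on S \<gamma> \<and> (\<exists>C\<in>\<gamma>. a \<in> C \<and> b \<in> C).
        of_int (partition_mobius (card \<gamma>)) * (\<Prod>C\<in>\<gamma>. m C))"
  unfolding cumulant_def
proof (rule sum.reindex_bij_witness[of _ "\<lambda>\<gamma>. (\<lambda>D. D - {a}) ` \<gamma>" "\<lambda>\<beta>. join_block a b ` \<beta>"])
  fix \<beta> assume "\<beta> \<in> {\<beta>. partition_on (S - {a}) \<beta>}"
  note join = partition_on_join_block[OF _ assms, of \<beta>]
  then show "(\<lambda>D. D - {a}) ` join_block a b ` \<beta> = \<beta>"
    and "join_block a b ` \<beta> \<in> {\<gamma>. partition_on S \<gamma> \<and> (\<exists>C\<in>\<gamma>. a \<in> C \<and> b \<in> C)}"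
    and "of_int (partition_mobius (card (join_block a b ` \<beta>))) * (\<Prod>C\<in>join_block a b ` \<beta>. m C)
      = of_int (partition_mobius (card \<beta>)) * (\<Prod>D\<in>\<beta>. m (join_block a b D))"
    using \<open>\<beta> \<in> _\<close> by (simp_all add: card_image prod.reindex)
next
  fix \<gamma> assume "\<gamma> \<in> {\<gamma>. partition_on S \<gamma> \<and> (\<exists>C\<in>\<gamma>. a \<in> C \<and> b \<in> C)}"
  then obtain C where \<gamma>: "partition_on S \<gamma>" and C: "C \<in> \<gamma>" "a \<in> C" "b \<in> C"
    by auto
  note remove = partition_on_remove_joined[OF \<gamma> C \<open>a \<noteq> b\<close>]
  then show "join_block a b ` (\<lambda>D. D - {a}) ` \<gamma> = \<gamma>"
    and "(\<lambda>D. D - {a}) ` \<gamma> \<in> {\<beta>. partition_on (S - {a}) \<beta>}"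
    by simp_all
qed

lemma partition_pair_union:
  assumes A: "A \<subseteq> S - {a, b}" and "a \<in> S" "b \<in> S" "a \<noteq> b"
    and \<alpha>: "partition_on (insert a A) \<alpha>" and \<beta>: "partition_on (insert b (S - {a, b} - A)) \<beta>"
  shows "partition_on S (\<alpha> \<union> \<beta>)" and "\<alpha> \<inter> \<beta> = {}"
    and "\<not> (\<exists>C\<in>\<alpha> \<union> \<beta>. a \<in> C \<and> b \<in> C)"
proof -
  have disj: "insert a A \<inter> insert b (S - {a, b} - A) = {}"
    using A assms by auto
  moreover have "insert a A \<union> insert b (S - {a, b} - A) = S"
    using A assms by auto
  ultimately show "partition_on S (\<alpha> \<union> \<beta>)" and "\<alpha> \<inter> \<beta> = {}"
    using partition_on_Un[OF \<alpha> \<beta>] by auto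
  show "\<not> (\<exists>C\<in>\<alpha> \<union> \<beta>. a \<in> C \<and> b \<in> C)"
    using disj partition_onD1[OF \<alpha>] partition_onD1[OF \<beta>] by blast
qed

lemma partition_pair_split:
  assumes \<gamma>: "partition_on S \<gamma>" and \<alpha>: "\<alpha> \<subseteq> \<gamma>" "a \<in> \<Union>\<alpha>" "b \<notin> \<Union>\<alpha>" and "b \<in> S"
  shows "\<Union>\<alpha> - {a} \<subseteq> S - {a, b}"
    and "partition_on (insert a (\<Union>\<alpha> - {a})) \<alpha>"
    and "partition_on (insert b (S - {a, b} - (\<Union>\<alpha> - {a}))) (\<gamma> - \<alpha>)"
proof -
  have "\<Union>\<alpha> \<subseteq> S"
    using \<alpha>(1) partition_onD1[OF \<gamma>] by auto
  then show "\<Union>\<alpha> - {a} \<subseteq> S - {a, b}"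
    using \<alpha>(3) by auto
  show "partition_on (insert a (\<Union>\<alpha> - {a})) \<alpha>"
    using partition_on_Union_subset[OF \<gamma> \<alpha>(1)] \<alpha>(2) by (simp add: insert_absorb)
  have "S - \<Union>\<alpha> = insert b (S - {a, b} - (\<Union>\<alpha> - {a}))"
    using \<alpha>(2,3) \<open>b \<in> S\<close> by auto
  then show "partition_on (insert b (S - {a, b} - (\<Union>\<alpha> - {a}))) (\<gamma> - \<alpha>)"
    using partition_on_Diff_Union[OF \<gamma> \<alpha>(1)] by simp
qed

lemma bij_betw_partition_pairs:
  assumes "a \<in> S" "b \<in> S" "a \<noteq> b"
  shows "bij_betw (\<lambda>(A, \<alpha>, \<beta>). (\<alpha> \<union> \<beta>, \<alpha>))
    (SIGMA A:Pow (S - {a, b}).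
       {\<alpha>. partition_on (insert a A) \<alpha>} \<times> {\<beta>. partition_on (insert b (S - {a, b} - A)) \<beta>})
    (SIGMA \<gamma>:{\<gamma>. partition_on S \<gamma> \<and> \<not> (\<exists>C\<in>\<gamma>. a \<in> C \<and> b \<in> C)}.
       {\<alpha>. \<alpha> \<subseteq> \<gamma> \<and> a \<in> \<Union>\<alpha> \<and> b \<notin> \<Union>\<alpha>})"
    (is "bij_betw ?f ?T ?U")
proof (rule bij_betw_byWitness[where f' = "\<lambda>(\<gamma>, \<alpha>). (\<Union>\<alpha> - {a}, \<alpha>, \<gamma> - \<alpha>)"])
  let ?g = "\<lambda>(\<gamma>, \<alpha>). (\<Union>\<alpha> - {a}, \<alpha>, \<gamma> - \<alpha>)"
  have forward: "?g (?f t) = t \<and> ?f t \<in> ?U" if t_mem: "t \<in> ?T" for t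
  proof -
    obtain A \<alpha> \<beta> where t: "t = (A, \<alpha>, \<beta>)" and A: "A \<subseteq> S - {a, b}"
      and \<alpha>: "partition_on (insert a A) \<alpha>" and \<beta>: "partition_on (insert b (S - {a, b} - A)) \<beta>"
      using t_mem by blast
    have "a \<in> \<Union>\<alpha>" "b \<notin> \<Union>\<alpha>" "\<Union>\<alpha> - {a} = A"
      using partition_onD1[OF \<alpha>] A assms(3) by auto
    then show ?thesis
      using partition_pair_union[OF A assms \<alpha> \<beta>] t by auto
  qed
  have backward: "?f (?g u) = u \<and> ?g u \<in> ?T" if u_mem: "u \<in> ?U" for u
  proof -
    obtain \<gamma> \<alpha> where u: "u = (\<gamma>, \<alpha>)" and hyps: "partition_on S \<gamma>" "\<alpha> \<subseteq> \<gamma>"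
      "a \<in> \<Union>\<alpha>" "b \<notin> \<Union>\<alpha>"
      using u_mem by blast
    show ?thesis
      using partition_pair_split[OF hyps assms(2)] u hyps(2) by auto
  qed
  show "\<forall>t\<in>?T. ?g (?f t) = t" "?f ` ?T \<subseteq> ?U"
    using forward by (intro ballI image_subsetI; simp)+
  show "\<forall>u\<in>?U. ?f (?g u) = u" "?g ` ?U \<subseteq> ?T"
    using backward by (intro ballI image_subsetI; simp)+
qed

lemma sum_partition_mobius_subpartitions:
  assumes "finite S" "partition_on S \<gamma>" "a \<in> S" "b \<in> S" and sep: "\<not> (\<exists>C\<in>\<gamma>. a \<in> C \<and> b \<in> C)"
  shows "(\<Sum>\<alpha> | \<alpha> \<subseteq> \<gamma> \<and> a \<in> \<Union>\<alpha> \<and> b \<notin> \<Union>\<alpha>.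
      partition_mobius (card \<alpha>) * partition_mobius (card (\<gamma> - \<alpha>))) = - partition_mobius (card \<gamma>)"
proof -
  obtain Ca Cb where C: "Ca \<in> \<gamma>" "a \<in> Ca" "Cb \<in> \<gamma>" "b \<in> Cb"
    using assms(3,4) partition_onD1[OF assms(2)] by blast
  have mem_Union_iff: "x \<in> \<Union>\<alpha> \<longleftrightarrow> C \<in> \<alpha>" if "\<alpha> \<subseteq> \<gamma>" "C \<in> \<gamma>" "x \<in> C" for \<alpha> x C
    using that partition_on_block_eq[OF assms(2)] by blast
  have "(\<alpha> \<subseteq> \<gamma> \<and> a \<in> \<Union>\<alpha> \<and> b \<notin> \<Union>\<alpha>) \<longleftrightarrow> (\<alpha> \<subseteq> \<gamma> \<and> Ca \<in> \<alpha> \<and> Cb \<notin> \<alpha>)" for \<alpha>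
    using mem_Union_iff[OF _ C(1,2), of \<alpha>] mem_Union_iff[OF _ C(3,4), of \<alpha>] by blast
  moreover have "Ca \<noteq> Cb"
    using C sep by blast
  ultimately show ?thesis
    using sum_partition_mobius_separating[OF finite_elements[OF assms(1,2)] C(1,3)] by simp
qed

lemma sum_separating_subpartitions:
  fixes m :: "'a set \<Rightarrow> 'r::comm_ring_1"
  assumes "finite S" "a \<in> S" "b \<in> S"
  shows "(\<Sum>(\<gamma>, \<alpha>)\<in>(SIGMA \<gamma>:{\<gamma>. partition_on S \<gamma> \<and> \<not> (\<exists>C\<in>\<gamma>. a \<in> C \<and> b \<in> C)}.
        {\<alpha>. \<alpha> \<subseteq> \<gamma> \<and> a \<in> \<Union>\<alpha> \<and> b \<notin> \<Union>\<alpha>}).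
      of_int (partition_mobius (card \<alpha>) * partition_mobius (card (\<gamma> - \<alpha>))) * (\<Prod>C\<in>\<gamma>. m C))
    = - (\<Sum>\<gamma> | partition_on S \<gamma> \<and> \<not> (\<exists>C\<in>\<gamma>. a \<in> C \<and> b \<in> C).
          of_int (partition_mobius (card \<gamma>)) * (\<Prod>C\<in>\<gamma>. m C))"
proof -
  let ?Sep = "{\<gamma>. partition_on S \<gamma> \<and> \<not> (\<exists>C\<in>\<gamma>. a \<in> C \<and> b \<in> C)}"
  have "(\<Sum>(\<gamma>, \<alpha>)\<in>(SIGMA \<gamma>:?Sep. {\<alpha>. \<alpha> \<subseteq> \<gamma> \<and> a \<in> \<Union>\<alpha> \<and> b \<notin> \<Union>\<alpha>}).
        of_int (partition_mobius (card \<alpha>) * partition_mobius (card (\<gamma> - \<alpha>))) * (\<Prod>C\<in>\<gamma>. m C))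
      = (\<Sum>\<gamma>\<in>?Sep. \<Sum>\<alpha> | \<alpha> \<subseteq> \<gamma> \<and> a \<in> \<Union>\<alpha> \<and> b \<notin> \<Union>\<alpha>.
        of_int (partition_mobius (card \<alpha>) * partition_mobius (card (\<gamma> - \<alpha>))) * (\<Prod>C\<in>\<gamma>. m C))"
    using finitely_many_partition_on[OF assms(1)] finite_elements[OF assms(1)]
    by (intro sum.Sigma[symmetric]) (auto elim: finite_subset[rotated])
  also have "\<dots> = (\<Sum>\<gamma>\<in>?Sep. - (of_int (partition_mobius (card \<gamma>)) * (\<Prod>C\<in>\<gamma>. m C)))"
  proof (intro sum.cong refl)
    fix \<gamma> assume "\<gamma> \<in> ?Sep"
    then have "(\<Sum>\<alpha> | \<alpha> \<subseteq> \<gamma> \<and> a \<in> \<Union>\<alpha> \<and> b \<notin> \<Union>\<alpha>.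
        of_int (partition_mobius (card \<alpha>) * partition_mobius (card (\<gamma> - \<alpha>))) :: 'r)
      = - of_int (partition_mobius (card \<gamma>))"
      using sum_partition_mobius_subpartitions[OF assms(1) _ assms(2,3)]
      unfolding of_int_sum[symmetric] by simp
    then show "(\<Sum>\<alpha> | \<alpha> \<subseteq> \<gamma> \<and> a \<in> \<Union>\<alpha> \<and> b \<notin> \<Union>\<alpha>.
        of_int (partition_mobius (card \<alpha>) * partition_mobius (card (\<gamma> - \<alpha>))) * (\<Prod>C\<in>\<gamma>. m C))
      = - (of_int (partition_mobius (card \<gamma>)) * (\<Prod>C\<in>\<gamma>. m C))"
      by (simp flip: sum_distrib_right)
  qed
  finally show ?thesis
    by (simp add: sum_negf)
qed

lemma sum_cumulant_products:
  fixes m :: "'a set \<Rightarrow> 'r::comm_ring_1"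
  assumes "finite S" "a \<in> S" "b \<in> S" "a \<noteq> b"
  shows "(\<Sum>A\<in>Pow (S - {a, b}). cumulant (insert a A) m * cumulant (insert b (S - {a, b} - A)) m)
    = - (\<Sum>\<gamma> | partition_on S \<gamma> \<and> \<not> (\<exists>C\<in>\<gamma>. a \<in> C \<and> b \<in> C).
          of_int (partition_mobius (card \<gamma>)) * (\<Prod>C\<in>\<gamma>. m C))"
proof -
  define R where "R = S - {a, b}"
  define Pairs where "Pairs = (SIGMA A:Pow R.
      {\<alpha>. partition_on (insert a A) \<alpha>} \<times> {\<beta>. partition_on (insert b (R - A)) \<beta>})"
  define w where "w \<alpha> = of_int (partition_mobius (card \<alpha>)) * (\<Prod>C\<in>\<alpha>. m C)" for \<alpha>
  define g where "g = (\<lambda>(\<gamma>, \<alpha>). of_int (partition_mobius (card \<alpha>) * partition_mobius (card (\<gamma> - \<alpha>)))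
      * (\<Prod>C\<in>\<gamma>. m C))"
  have fin_R: "finite R"
    using assms(1) by (simp add: R_def)
  have weight: "w \<alpha> * w \<beta> = g (\<alpha> \<union> \<beta>, \<alpha>)" if "(A, \<alpha>, \<beta>) \<in> Pairs" for A \<alpha> \<beta>
  proof -
    have A: "A \<subseteq> R" and \<alpha>: "partition_on (insert a A) \<alpha>" and \<beta>: "partition_on (insert b (R - A)) \<beta>"
      using that by (auto simp: Pairs_def)
    then have "\<alpha> \<inter> \<beta> = {}"
      using partition_pair_union(2)[OF _ assms(2-4)] by (simp add: R_def)
    moreover from this have "\<alpha> \<union> \<beta> - \<alpha> = \<beta>"
      by blast
    moreover have "finite (insert a A)" "finite (insert b (R - A))"
      using A fin_R by (auto dest: finite_subset)
    then have "finite \<alpha>" "finite \<beta>"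
      using finite_elements \<alpha> \<beta> by blast+
    ultimately show ?thesis
      by (simp add: g_def w_def prod.union_disjoint algebra_simps)
  qed
  have "(\<Sum>A\<in>Pow R. cumulant (insert a A) m * cumulant (insert b (R - A)) m)
      = (\<Sum>(A, \<alpha>, \<beta>)\<in>Pairs. w \<alpha> * w \<beta>)"
    unfolding cumulant_def w_def sum_product sum.cartesian_product Pairs_def using fin_R
    by (subst sum.Sigma) (auto intro!: finitely_many_partition_on dest: finite_subset)
  also have "\<dots> = (\<Sum>t\<in>Pairs. g ((\<lambda>(A, \<alpha>, \<beta>). (\<alpha> \<union> \<beta>, \<alpha>)) t))"
    using weight by (intro sum.cong refl) clarsimp
  also have "\<dots> = (\<Sum>(\<gamma>, \<alpha>)\<in>(SIGMA \<gamma>:{\<gamma>. partition_on S \<gamma> \<and> \<not> (\<exists>C\<in>\<gamma>. a \<in> C \<and> b \<in> C)}.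
        {\<alpha>. \<alpha> \<subseteq> \<gamma> \<and> a \<in> \<Union>\<alpha> \<and> b \<notin> \<Union>\<alpha>}). g (\<gamma>, \<alpha>))"
    using sum.reindex_bij_betw[OF bij_betw_partition_pairs[OF assms(2-4)], of g]
    by (simp add: Pairs_def R_def)
  finally show ?thesis
    using sum_separating_subpartitions[OF assms(1-3), of m] by (simp add: R_def g_def)
qed

lemma cumulant_join_block_eq:
  fixes m :: "'a set \<Rightarrow> 'r::comm_ring_1"
  assumes "finite S" "a \<in> S" "b \<in> S" "a \<noteq> b"
  shows "cumulant (S - {a}) (\<lambda>D. m (join_block a b D))
    = cumulant S m
      + (\<Sum>A\<in>Pow (S - {a, b}). cumulant (insert a A) m * cumulant (insert b (S - {a, b} - A)) m)"
proof -
  let ?same = "\<lambda>\<gamma>. \<exists>C\<in>\<gamma>. a \<in> C \<and> b \<in> C"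
  let ?w = "\<lambda>\<gamma>. of_int (partition_mobius (card \<gamma>)) * (\<Prod>C\<in>\<gamma>. m C)"
  have "cumulant S m
      = (\<Sum>\<gamma> | partition_on S \<gamma> \<and> ?same \<gamma>. ?w \<gamma>) + (\<Sum>\<gamma> | partition_on S \<gamma> \<and> \<not> ?same \<gamma>. ?w \<gamma>)"
    unfolding cumulant_def
    using sum.Int_Diff[OF finitely_many_partition_on[OF assms(1)], of _ "Collect ?same"]
    by (simp add: Collect_conj_eq set_diff_eq)
  also have "(\<Sum>\<gamma> | partition_on S \<gamma> \<and> ?same \<gamma>. ?w \<gamma>) = cumulant (S - {a}) (\<lambda>D. m (join_block a b D))"
    by (rule cumulant_join_block[OF assms(2-4), symmetric])
  also have "(\<Sum>\<gamma> | partition_on S \<gamma> \<and> \<not> ?same \<gamma>. ?w \<gamma>)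
      = - (\<Sum>A\<in>Pow (S - {a, b}). cumulant (insert a A) m * cumulant (insert b (S - {a, b} - A)) m)"
    unfolding sum_cumulant_products[OF assms] by simp
  finally show ?thesis
    by simp
qed

section \<open>Connected products\<close>

definition pointwise_prod :: "('a \<Rightarrow> partition \<Rightarrow> rat) \<Rightarrow> 'a set \<Rightarrow> induced" where
  "pointwise_prod h C = Abs_induced (\<lambda>l. \<Prod>c\<in>C. h c l)"

lemma connprod_eq_cumulant:
  "connprod hs = Rep_induced (cumulant {1..length hs} (pointwise_prod (\<lambda>c. hs ! (c - 1))))"
proof
  fix l
  have "bigodot (\<lambda>C l. \<Prod>c\<in>C. (hs ! (c - 1)) l) \<alpha> l
      = Rep_induced (\<Prod>C\<in>\<alpha>. pointwise_prod (\<lambda>c. hs ! (c - 1)) C) l"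
    if "partition_on {1..length hs} \<alpha>" for \<alpha>
    using finite_elements[OF _ that] by (simp add: bigodot_eq_Rep_induced_prod pointwise_prod_def)
  then show "connprod hs l
      = Rep_induced (cumulant {1..length hs} (pointwise_prod (\<lambda>c. hs ! (c - 1)))) l"
    unfolding connprod_def cumulant_def Rep_induced_sum Rep_induced_of_int_mult
    by (intro sum.cong refl) (simp add: partition_mobius_def)
qed

lemma connprod_map_distinct:
  assumes "distinct ys"
  shows "connprod (map f ys) = Rep_induced (cumulant (set ys) (pointwise_prod f))"
proof -
  define \<sigma> where "\<sigma> c = ys ! (c - 1)" for c
  have "bij_betw (\<lambda>c. c - 1) {1..length ys} {..<length ys}"
    by (rule bij_betw_byWitness[where f' = Suc]) auto
  then have bij: "bij_betw \<sigma> {1..length ys} (set ys)"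
    unfolding \<sigma>_def using bij_betw_trans[OF _ bij_betw_nth[OF assms refl refl]] by (simp add: comp_def)
  have "pointwise_prod (\<lambda>c. map f ys ! (c - 1)) C = pointwise_prod f (\<sigma> ` C)"
    if "C \<subseteq> {1..length ys}" for C
  proof -
    have "inj_on \<sigma> C"
      using bij that by (auto simp: bij_betw_def dest: inj_on_subset)
    moreover have "map f ys ! (c - 1) = f (\<sigma> c)" if "c \<in> C" for c
    proof -
      have "c - 1 < length ys"
        using \<open>C \<subseteq> {1..length ys}\<close> that by fastforce
      then show ?thesis
        by (simp add: \<sigma>_def)
    qed
    ultimately show ?thesis
      by (simp add: pointwise_prod_def prod.reindex)
  qed
  then have "cumulant {1..length ys} (pointwise_prod (\<lambda>c. map f ys ! (c - 1)))
      = cumulant {1..length ys} (\<lambda>C. pointwise_prod f (\<sigma> ` C))"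
    by (rule cumulant_cong)
  also have "\<dots> = cumulant (set ys) (pointwise_prod f)"
    by (rule cumulant_bij[OF bij])
  finally show ?thesis
    by (simp add: connprod_eq_cumulant)
qed

lemma connprod_Cons_sorted_list_of_set:
  assumes "finite B" "x \<notin> B"
  shows "connprod (f x # map f (sorted_list_of_set B)) = Rep_induced (cumulant (insert x B) (pointwise_prod f))"
  using connprod_map_distinct[of "x # sorted_list_of_set B" f] assms by simp

lemma pointwise_prod_join_block:
  assumes "finite D" "a \<notin> D"
  shows "pointwise_prod (f(b := \<lambda>l. f a l * f b l)) D = pointwise_prod f (join_block a b D)"
proof (cases "b \<in> D")
  case True
  have "(\<Prod>d\<in>D. (f(b := \<lambda>l. f a l * f b l)) d l) = f a l * (f b l * (\<Prod>d\<in>D - {b}. f d l))" for l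
    using assms True by (simp add: prod.remove[of D b] mult.assoc)
  also have "f a l * (f b l * (\<Prod>d\<in>D - {b}. f d l)) = (\<Prod>d\<in>insert a D. f d l)" for l
    using assms True by (simp add: prod.remove[of D b])
  finally show ?thesis
    using True by (simp add: pointwise_prod_def join_block_def)
next
  case False
  then have "(\<Prod>d\<in>D. (f(b := \<lambda>l. f a l * f b l)) d l) = (\<Prod>d\<in>D. f d l)" for l
    by (intro prod.cong) auto
  with False show ?thesis
    by (simp add: pointwise_prod_def join_block_def)
qed

lemma connprod_Cons_times:
  assumes "n \<ge> 2"
  shows "connprod ((\<lambda>l. f 1 l * f 2 l) # map f [3..<n+1])
    = Rep_induced (cumulant ({1..n} - {1}) (\<lambda>D. pointwise_prod f (join_block 1 2 D)))"
proof -
  let ?f12 = "f(2 := \<lambda>l. f 1 l * f 2 l)"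
  have "(\<lambda>l. f 1 l * f 2 l) # map f [3..<n+1] = map ?f12 [2..<n+1]"
    using assms by (simp add: upt_conv_Cons)
  moreover have "set [2..<n+1] = {1..n} - {1}"
    by auto
  ultimately have "connprod ((\<lambda>l. f 1 l * f 2 l) # map f [3..<n+1])
      = Rep_induced (cumulant ({1..n} - {1}) (pointwise_prod ?f12))"
    using connprod_map_distinct[OF distinct_upt, of ?f12 2 "n + 1"] by simp
  also have "cumulant ({1..n} - {1}) (pointwise_prod ?f12)
      = cumulant ({1..n} - {1}) (\<lambda>D. pointwise_prod f (join_block 1 2 D))"
    by (intro cumulant_cong pointwise_prod_join_block) (auto dest: finite_subset)
  finally show ?thesis .
qed

lemma Rep_induced_cumulant_expansion:
  "Rep_induced (cumulant {1..n} (pointwise_prod f)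
      + (\<Sum>A\<in>Pow {3..n}. cumulant (insert 1 A) (pointwise_prod f)
                        * cumulant (insert 2 ({3..n} - A)) (pointwise_prod f)))
    = (\<lambda>l. connprod (map f [1..<n+1]) l +
      (\<Sum>A\<in>Pow {3..n}.
         odot (connprod (f 1 # map f (sorted_list_of_set A)))
              (connprod (f 2 # map f (sorted_list_of_set ({3..n} - A)))) l))"
proof -
  have "set [1..<n+1] = {1..n}"
    by auto
  then have all: "connprod (map f [1..<n+1]) = Rep_induced (cumulant {1..n} (pointwise_prod f))"
    using connprod_map_distinct[OF distinct_upt, of f 1 "n + 1"] by simp
  have parts: "odot (connprod (f 1 # map f (sorted_list_of_set A)))
      (connprod (f 2 # map f (sorted_list_of_set ({3..n} - A))))
    = Rep_induced (cumulant (insert 1 A) (pointwise_prod f)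
                   * cumulant (insert 2 ({3..n} - A)) (pointwise_prod f))"
    if "A \<in> Pow {3..n}" for A
  proof -
    have "finite A" "1 \<notin> A"
      using that by (auto dest: finite_subset)
    then show ?thesis
      by (simp add: connprod_Cons_sorted_list_of_set Rep_induced_mult)
  qed
  show ?thesis
    unfolding all Rep_induced_add Rep_induced_sum
    by (intro ext arg_cong2[where f = "(+)"] refl sum.cong) (simp only: parts)
qed

theorem proposition3p2p7:
  fixes n :: nat and f :: "nat \<Rightarrow> partition \<Rightarrow> rat"
  assumes "n \<ge> 2"
  shows "connprod ((\<lambda>l. f 1 l * f 2 l) # map f [3..<n+1]) =
    (\<lambda>l. connprod (map f [1..<n+1]) l +
      (\<Sum>A\<in>Pow {3..n}.
         odot (connprod (f 1 # map f (sorted_list_of_set A)))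
              (connprod (f 2 # map f (sorted_list_of_set ({3..n} - A)))) l))"
proof -
  let ?h = "pointwise_prod f"
  have "{1..n} - {1, 2} = {3..n}"
    by auto
  then have "cumulant ({1..n} - {1}) (\<lambda>D. ?h (join_block 1 2 D))
      = cumulant {1..n} ?h
        + (\<Sum>A\<in>Pow {3..n}. cumulant (insert 1 A) ?h * cumulant (insert 2 ({3..n} - A)) ?h)"
    using cumulant_join_block_eq[of "{1..n}" 1 2 ?h] assms by simp
  then show ?thesis
    unfolding connprod_Cons_times[OF assms] Rep_induced_cumulant_expansion[symmetric] by simp
qed

end
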